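(* Let $\Bbbk$ be a field of characteristic $2$, $G=\langle\sigma\rangle$ cyclic of order $4$ acting on $V=V_3$ with $\sigma x_1=x_1+x_2$, $\sigma x_2=x_2+x_3$, $\sigma x_3=x_3$ on the dual basis, and $A=\Bbbk[N^G(x_1),\ x_2(x_2+x_3),\ x_3]$ with $N^G(x_1)=\prod_{i=0}^3\sigma^i(x_1)$. Then $K_3=\ker(\Delta^3:\Bbbk[V]\to\Bbbk[V])$ is a free $A$-module with basis $\{1,\ x_1,\ x_2,\ x_1^2,\ \Delta(x_1^3),\ \Delta(x_1^3x_2)\}$.
   Context: $\Delta=\sigma-\iota\in\Bbbk G$ acting on $\Bbbk[V]=\Bbbk[x_1,x_2,x_3]$. *)

theory Defs
  imports "HOL-Computational_Algebra.Polynomial"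
begin

text \<open>The polynomial ring k[x1,x2,x3] is represented as the iterated
univariate ring ((k[x3])[x2])[x1], i.e. the type 'k poly poly poly.\<close>

type_synonym 'k mpoly3 = "'k poly poly poly"

definition x1 :: "'k::field mpoly3" where "x1 = [:0, 1:]"
definition x2 :: "'k::field mpoly3" where "x2 = [:[:0, 1:]:]"
definition x3 :: "'k::field mpoly3" where "x3 = [:[:[:0, 1:]:]:]"

definition const3 :: "'k::field \<Rightarrow> 'k mpoly3" where
  "const3 c = [:[:[:c:]:]:]"

text \<open>On k[x3][x2]: the substitution x2 \<mapsto> x2 + x3, x3 \<mapsto> x3.\<close>
definition sigma2 :: "'k::field poly poly \<Rightarrow> 'k poly poly" where
  "sigma2 g = poly (map_poly (\<lambda>c. [:c:]) g) ([:0, 1:] + [:[:0, 1:]:])"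

text \<open>The k-algebra automorphism sigma of k[x1,x2,x3] with
  sigma x1 = x1 + x2, sigma x2 = x2 + x3, sigma x3 = x3.\<close>
definition sigma :: "'k::field mpoly3 \<Rightarrow> 'k mpoly3" where
  "sigma f = poly (map_poly (\<lambda>c. [:sigma2 c:]) f) (x1 + x2)"

definition Delta :: "'k::field mpoly3 \<Rightarrow> 'k mpoly3" where
  "Delta f = sigma f - f"

definition normx1 :: "'k::field mpoly3" where
  "normx1 = (\<Prod>i<4. (sigma ^^ i) x1)"

inductive_set subalg :: "'k::field mpoly3 set \<Rightarrow> 'k mpoly3 set" for S where
  const: "const3 c \<in> subalg S"
| gen: "s \<in> S \<Longrightarrow> s \<in> subalg S"
| add: "a \<in> subalg S \<Longrightarrow> b \<in> subalg S \<Longrightarrow> a + b \<in> subalg S"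
| mult: "a \<in> subalg S \<Longrightarrow> b \<in> subalg S \<Longrightarrow> a * b \<in> subalg S"

definition Aalg :: "'k::field mpoly3 set" where
  "Aalg = subalg {normx1, x2 * (x2 + x3), x3}"

definition K3 :: "'k::field mpoly3 set" where
  "K3 = {f. (Delta ^^ 3) f = 0}"

definition free_with_basis :: "'a::comm_ring_1 set \<Rightarrow> 'a set \<Rightarrow> 'a list \<Rightarrow> bool" where
  "free_with_basis R M bs \<longleftrightarrow>
     M = {\<Sum>i<length bs. a i * bs ! i | a. \<forall>i<length bs. a i \<in> R}
   \<and> (\<forall>a. (\<forall>i<length bs. a i \<in> R) \<and> (\<Sum>i<length bs. a i * bs ! i) = 0
          \<longrightarrow> (\<forall>i<length bs. a i = 0))"

end

theory Submission
  imports Defs "HOL-Computational_Algebra.Polynomial_Factorial"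
begin

text \<open>Write q = x2 (x2 + x3). Since N is monic of degree 4 in x1 and q is monic of degree 2 in
  x2, k[V] is a free A-module on the eight monomials x1^a x2^b (a < 4, b < 2). In characteristic
  two the generators of A are sigma-invariant, so Delta^3 is A-linear, and computing it on the
  eight monomials shows that a combination with coefficients c_ab lies in K3 iff c_31 = 0 and
  c_30 q + c_11 x3 + c_21 x3^2 = 0. As x3 is prime, does not divide q, and every element of A
  divisible by x3 in k[V] is divisible by x3 in A, this forces c_30 = x3 e and
  c_11 = c_21 x3 + e q with e in A. Rewriting such combinations through Delta(x1^3) and
  Delta(x1^3 x2) gives exactly the A-span of the six stated elements, and their independence is
  read off from the monomial coordinates.\<close>

lemma map_poly_add_hom:
  assumes "f 0 = 0" "\<And>a b. f (a + b) = f a + f b"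
  shows "map_poly f (p + q) = map_poly f p + map_poly f q"
  by (intro poly_eqI) (simp add: coeff_map_poly assms)

lemma map_poly_mult_hom:
  fixes f :: "'a::comm_semiring_0 \<Rightarrow> 'b::comm_semiring_0"
  assumes "f 0 = 0" "\<And>a b. f (a + b) = f a + f b" "\<And>a b. f (a * b) = f a * f b"
  shows "map_poly f (p * q) = map_poly f p * map_poly f q"
proof (induct p)
  case (pCons a p)
  then show ?case
    by (simp add: map_poly_add_hom[where f = f, OF assms(1,2)] map_poly_pCons assms(1)
        map_poly_smult[where f = f, OF assms(1,3)])
qed simp

lemma degree_X_pow_mult_pcompose:
  fixes F N :: "'a::idom poly"
  assumes "F \<noteq> 0" and "0 < degree N"
  shows "degree ([:0, 1:] ^ a * pcompose F N) = a + degree N * degree F"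
proof -
  have "pcompose F N \<noteq> 0"
    using assms lead_coeff_comp[of N F] by auto
  then show ?thesis
    by (simp add: degree_mult_eq degree_linear_power degree_pcompose mult.commute)
qed

lemma lead_coeff_X_pow_mult_pcompose:
  fixes F N :: "'a::idom poly"
  assumes "0 < degree N"
  shows "lead_coeff ([:0, 1:] ^ a * pcompose F N) = lead_coeff F * lead_coeff N ^ degree F"
  using assms by (simp add: lead_coeff_mult lead_coeff_power lead_coeff_comp)

text \<open>The terms of the sum have pairwise distinct degrees, since the degree of the a-th term is
  congruent to a modulo n; so the term of largest degree cannot cancel.\<close>

lemma pcompose_expansion_eq_0:
  fixes N :: "'a::idom poly"
  assumes deg: "degree N = n" "0 < n"
    and sum0: "(\<Sum>a<n. [:0, 1:] ^ a * pcompose (F a) N) = 0"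
  shows "\<forall>a<n. F a = 0"
proof (rule ccontr)
  define T where "T a = [:0, 1:] ^ a * pcompose (F a) N" for a
  define S where "S = {a. a < n \<and> F a \<noteq> 0}"
  assume "\<not> (\<forall>a<n. F a = 0)"
  then have "S \<noteq> {}" by (auto simp: S_def)
  then obtain a0 where a0: "a0 \<in> S"
    and max: "\<And>a. a \<in> S \<Longrightarrow> degree (T a) \<le> degree (T a0)"
    using Max_in[of "(degree \<circ> T) ` S"] Max_ge[of "(degree \<circ> T) ` S"]
    by (fastforce simp: S_def)
  have degree_T: "degree (T a) = a + n * degree (F a)" if "a \<in> S" for a
    using that deg by (simp add: S_def T_def degree_X_pow_mult_pcompose)
  have "coeff (T a) (degree (T a0)) = 0" if "a < n" "a \<noteq> a0" for a
  proof (cases "a \<in> S")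
    case True
    have "degree (T a) \<noteq> degree (T a0)"
      using that a0 True by (metis S_def degree_T mem_Collect_eq mod_mult_self2 mod_less)
    then show ?thesis
      using max[OF True] by (simp add: coeff_eq_0)
  qed (use that in \<open>simp add: S_def T_def\<close>)
  then have "coeff (\<Sum>a<n. T a) (degree (T a0)) = lead_coeff (T a0)"
    using a0 by (simp add: S_def coeff_sum sum.remove[of "{..<n}" a0])
  also have "\<dots> \<noteq> 0"
    using a0 deg leading_coeff_0_iff[of N]
    by (auto simp: S_def T_def lead_coeff_X_pow_mult_pcompose)
  finally show False
    using sum0 by (simp add: T_def)
qed

definition lin_comb :: "(nat \<Rightarrow> 'a) \<Rightarrow> 'a list \<Rightarrow> 'a::comm_ring_1" where
  "lin_comb a bs = (\<Sum>i<length bs. a i * bs ! i)"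

definition lin_span :: "'a::comm_ring_1 set \<Rightarrow> 'a list \<Rightarrow> 'a set" where
  "lin_span R bs = {lin_comb a bs | a. \<forall>i<length bs. a i \<in> R}"

lemma free_with_basis_iff:
  "free_with_basis R M bs \<longleftrightarrow> M = lin_span R bs \<and>
     (\<forall>a. (\<forall>i<length bs. a i \<in> R) \<and> lin_comb a bs = 0 \<longrightarrow> (\<forall>i<length bs. a i = 0))"
  by (simp add: free_with_basis_def lin_span_def lin_comb_def)

lemma lin_comb_in_lin_span: "\<forall>i<length bs. a i \<in> R \<Longrightarrow> lin_comb a bs \<in> lin_span R bs"
  by (auto simp: lin_span_def)

lemma lin_comb_nth_in_lin_span:
  "length cs = length bs \<Longrightarrow> set cs \<subseteq> R \<Longrightarrow> lin_comb ((!) cs) bs \<in> lin_span R bs"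
  by (auto intro!: lin_comb_in_lin_span)

lemma lin_span_add:
  assumes "\<And>x y. x \<in> R \<Longrightarrow> y \<in> R \<Longrightarrow> x + y \<in> R"
    and "f \<in> lin_span R bs" "g \<in> lin_span R bs"
  shows "f + g \<in> lin_span R bs"
proof -
  obtain a b where "f = lin_comb a bs" "g = lin_comb b bs"
    and "\<forall>i<length bs. a i \<in> R" "\<forall>i<length bs. b i \<in> R"
    using assms(2,3) by (auto simp: lin_span_def)
  moreover have "lin_comb a bs + lin_comb b bs = lin_comb (\<lambda>i. a i + b i) bs"
    by (simp add: lin_comb_def sum.distrib distrib_right)
  ultimately show ?thesis by (auto intro!: lin_comb_in_lin_span assms(1))
qed

lemma lin_span_mult:
  assumes "\<And>x y. x \<in> R \<Longrightarrow> y \<in> R \<Longrightarrow> x * y \<in> R"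
    and "r \<in> R" "f \<in> lin_span R bs"
  shows "r * f \<in> lin_span R bs"
proof -
  obtain a where "f = lin_comb a bs" "\<forall>i<length bs. a i \<in> R"
    using assms(3) by (auto simp: lin_span_def)
  moreover have "r * lin_comb a bs = lin_comb (\<lambda>i. r * a i) bs"
    by (simp add: lin_comb_def sum_distrib_left mult.assoc)
  ultimately show ?thesis by (auto intro!: lin_comb_in_lin_span assms(1,2))
qed

section \<open>The automorphism sigma and its invariants\<close>

lemma sigma2_eq_pcompose: "sigma2 g = pcompose g ([:0, 1:] + [:[:0, 1:]:])"
  by (simp add: sigma2_def pcompose_altdef)

lemma sigma2_0: "sigma2 0 = 0"
  and sigma2_1: "sigma2 1 = 1"
  and sigma2_add: "sigma2 (a + b) = sigma2 a + sigma2 b"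
  and sigma2_mult: "sigma2 (a * b) = sigma2 a * sigma2 b"
  by (simp_all add: sigma2_eq_pcompose pcompose_add pcompose_mult pcompose_1)

lemma sigma_eq_pcompose: "sigma f = pcompose (map_poly sigma2 f) (x1 + x2)"
  by (simp add: sigma_def pcompose_altdef map_poly_map_poly sigma2_0 o_def)

lemma map_poly_sigma2_add: "map_poly sigma2 (p + q) = map_poly sigma2 p + map_poly sigma2 q"
  by (rule map_poly_add_hom) (simp_all add: sigma2_0 sigma2_add)

lemma map_poly_sigma2_mult: "map_poly sigma2 (p * q) = map_poly sigma2 p * map_poly sigma2 q"
  by (rule map_poly_mult_hom) (simp_all add: sigma2_0 sigma2_add sigma2_mult)

lemma sigma_0: "sigma 0 = 0"
  and sigma_1: "sigma 1 = 1"
  and sigma_add: "sigma (a + b) = sigma a + sigma b"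
  and sigma_mult: "sigma (a * b) = sigma a * sigma b"
  by (simp_all add: sigma_eq_pcompose sigma2_1 map_poly_sigma2_add map_poly_sigma2_mult
      pcompose_add pcompose_mult pcompose_1)

lemma sigma_diff: "sigma (a - b) = sigma a - sigma b"
proof -
  have "sigma a = sigma (a - b) + sigma b"
    using sigma_add[of "a - b" b] by simp
  then show ?thesis by simp
qed

lemma sigma_power: "sigma (a ^ n) = sigma a ^ n"
  by (induct n) (simp_all add: sigma_1 sigma_mult)

lemma sigma_x1: "sigma x1 = x1 + x2"
  and sigma_x2: "sigma x2 = x2 + x3"
  and sigma_x3: "sigma x3 = x3"
  and sigma_const3: "sigma (const3 c) = const3 c"
  by (simp_all add: sigma_eq_pcompose x1_def x2_def x3_def const3_def sigma2_eq_pcompose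
      map_poly_pCons sigma2_0 sigma2_1 pcompose_pCons pcompose_1)

lemma Delta_0: "Delta 0 = 0"
  by (simp add: Delta_def sigma_0)

lemma Delta_add: "Delta (a + b) = Delta a + Delta b"
  by (simp add: Delta_def sigma_add)

lemma Delta_mult_invariant: "sigma c = c \<Longrightarrow> Delta (c * f) = c * Delta f"
  by (simp add: Delta_def sigma_mult algebra_simps)

lemma Delta_pow_lin_comb:
  assumes "\<forall>i<length bs. sigma (a i) = a i"
  shows "(Delta ^^ n) (lin_comb a bs) = lin_comb a (map (Delta ^^ n) bs)"
proof (induct n)
  case (Suc n)
  have "Delta (\<Sum>i<length bs. a i * cs i) = (\<Sum>i<length bs. a i * Delta (cs i))" for cs
  proof -
    have "Delta (\<Sum>i<length bs. a i * cs i) = (\<Sum>i<length bs. Delta (a i * cs i))"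
      by (rule sum_comp_morphism[of Delta, OF Delta_0 Delta_add, unfolded o_def, symmetric])
    also have "\<dots> = (\<Sum>i<length bs. a i * Delta (cs i))"
      using assms by (simp add: Delta_mult_invariant)
    finally show ?thesis .
  qed
  then show ?case using Suc by (simp add: lin_comb_def)
qed simp

lemma subalg_0: "0 \<in> subalg S"
  using subalg.const[of 0 S] by (simp add: const3_def)

lemma subalg_1: "1 \<in> subalg S"
  using subalg.const[of 1 S] by (simp add: const3_def pCons_one)

lemma subalg_uminus:
  fixes a :: "'k::field mpoly3"
  assumes "a \<in> subalg S"
  shows "- a \<in> subalg S"
proof -
  have "const3 (-1) = (-1 :: 'k mpoly3)" by (simp add: const3_def one_pCons)
  then show ?thesis using subalg.mult[OF subalg.const assms, of "-1"] by simp
qed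

lemma subalg_diff: "a \<in> subalg S \<Longrightarrow> b \<in> subalg S \<Longrightarrow> a - b \<in> subalg S"
  using subalg.add[OF _ subalg_uminus, of a S b] by simp

lemma subalg_power: "a \<in> subalg S \<Longrightarrow> a ^ n \<in> subalg S"
  by (induct n) (simp_all add: subalg_1 subalg.mult)

lemmas subalg_closed = subalg.gen subalg.const subalg_0 subalg_1 subalg.add subalg.mult
  subalg_uminus subalg_diff subalg_power

lemma sigma_subalg:
  assumes "\<And>s. s \<in> S \<Longrightarrow> sigma s = s" and "a \<in> subalg S"
  shows "sigma a = a"
  using assms(2) by induct (simp_all add: assms(1) sigma_const3 sigma_add sigma_mult)

lemma two_eq_zero:
  assumes "CHAR('k::field) = 2"
  shows "(2::'k mpoly3) = 0"
proof -
  have "(of_nat 2 :: 'k) = 0" using of_nat_CHAR[where 'a = 'k] assms by simp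
  then have "(of_nat 2 :: 'k mpoly3) = 0" by (simp add: of_nat_poly)
  then show ?thesis by simp
qed

text \<open>Polynomial identities in characteristic two are proved by exhibiting the integer cofactor
  of 2 in the difference of the two sides.\<close>

lemma char2_eqI: "(2::'a::comm_ring_1) = 0 \<Longrightarrow> a = b + 2 * (c::'a) \<Longrightarrow> a = b"
  by simp

lemma char2_uminus: "(2::'a::comm_ring_1) = 0 \<Longrightarrow> - a = (a::'a)"
  by (metis add_eq_0_iff2 mult_2 mult_zero_left)

definition normx2 :: "'k::field mpoly3" where
  "normx2 = x2 * (x2 + x3)"

lemma normx1_eq: "normx1 = x1 * sigma x1 * sigma (sigma x1) * sigma (sigma (sigma x1))"
  by (simp add: normx1_def eval_nat_numeral mult_ac)

lemma normx1_expand: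
  assumes "CHAR('k::field) = 2"
  shows "(normx1 :: 'k mpoly3) = x1 ^ 4 + (normx2 + x3 ^ 2) * x1 ^ 2 + x3 * normx2 * x1"
  unfolding normx1_eq normx2_def sigma_add sigma_x1 sigma_x2 sigma_x3
  by (rule char2_eqI[OF two_eq_zero[OF assms], where c = "x1*x2*x3^2 + 4*x1*x2^2*x3
      + 3*x1*x2^3 + 6*x1^2*x2*x3 + 5*x1^2*x2^2 + x1^2*x3^2 + 3*x1^3*x2 + 2*x1^3*x3"]) algebra

lemma sigma_normx2:
  assumes "CHAR('k::field) = 2"
  shows "sigma (normx2 :: 'k mpoly3) = normx2"
  unfolding normx2_def sigma_mult sigma_add sigma_x2 sigma_x3
  by (rule char2_eqI[OF two_eq_zero[OF assms], where c = "x2*x3 + x3^2"]) algebra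

lemma sigma_normx1:
  assumes "CHAR('k::field) = 2"
  shows "sigma (normx1 :: 'k mpoly3) = normx1"
proof -
  have "sigma (sigma (sigma (sigma (x1 :: 'k mpoly3)))) = x1"
    unfolding sigma_add sigma_x1 sigma_x2 sigma_x3
    by (rule char2_eqI[OF two_eq_zero[OF assms], where c = "2*x2 + 3*x3"]) algebra
  then show ?thesis
    unfolding normx1_eq by (simp add: sigma_mult mult_ac)
qed

lemma sigma_Aalg:
  assumes "CHAR('k::field) = 2" and "(a :: 'k mpoly3) \<in> Aalg"
  shows "sigma a = a"
  using assms(2) unfolding Aalg_def
  by (rule sigma_subalg[rotated])
    (auto simp: sigma_normx1[OF assms(1)] sigma_normx2[OF assms(1), unfolded normx2_def] sigma_x3)

section \<open>The monomial basis of k[V] over A\<close>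

definition monomial_basis :: "'k::field mpoly3 list" where
  "monomial_basis = [1, x1, x1 ^ 2, x1 ^ 3, x2, x1 * x2, x1 ^ 2 * x2, x1 ^ 3 * x2]"

lemma length_monomial_basis [simp]: "length monomial_basis = 8"
  by (simp add: monomial_basis_def)

lemma lin_comb_monomial_basis:
  "lin_comb c monomial_basis = c 0 + c 1 * x1 + c 2 * x1 ^ 2 + c 3 * x1 ^ 3
     + c 4 * x2 + c 5 * (x1 * x2) + c 6 * (x1 ^ 2 * x2) + c 7 * (x1 ^ 3 * x2)"
  by (simp add: lin_comb_def monomial_basis_def eval_nat_numeral)

definition normx2_poly :: "'k::field poly poly" where
  "normx2_poly = [:0, [:0, 1:], 1:]"

lemma normx2_eq_const: "normx2 = [:normx2_poly:]"
  by (simp add: normx2_def normx2_poly_def x2_def x3_def)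

text \<open>For P in k[x3][Y][Z], eval_gens P is P evaluated at Y = normx2 and Z = normx1;
  every element of A has this form.\<close>

definition subst_normx2 :: "'k::field poly poly \<Rightarrow> 'k poly poly" where
  "subst_normx2 Q = pcompose Q normx2_poly"

definition eval_gens :: "'k::field poly poly poly \<Rightarrow> 'k mpoly3" where
  "eval_gens P = pcompose (map_poly subst_normx2 P) normx1"

lemma subst_normx2_0: "subst_normx2 0 = 0"
  and subst_normx2_add: "subst_normx2 (a + b) = subst_normx2 a + subst_normx2 b"
  and subst_normx2_mult: "subst_normx2 (a * b) = subst_normx2 a * subst_normx2 b"
  by (simp_all add: subst_normx2_def pcompose_add pcompose_mult)

lemma eval_gens_add: "eval_gens (P + Q) = eval_gens P + eval_gens Q"
  by (simp add: eval_gens_def pcompose_add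
      map_poly_add_hom[where f = subst_normx2, OF subst_normx2_0 subst_normx2_add])

lemma eval_gens_mult: "eval_gens (P * Q) = eval_gens P * eval_gens Q"
  by (simp add: eval_gens_def pcompose_mult
      map_poly_mult_hom[where f = subst_normx2,
        OF subst_normx2_0 subst_normx2_add subst_normx2_mult])

lemma Aalg_eval_gens: "a \<in> Aalg \<Longrightarrow> \<exists>P. a = eval_gens P"
  unfolding Aalg_def
proof (induct rule: subalg.induct)
  case (const c)
  show ?case
    by (rule exI[of _ "[:[:[:c:]:]:]"])
      (simp add: eval_gens_def const3_def map_poly_pCons subst_normx2_0 subst_normx2_def)
next
  case (gen s)
  have "eval_gens [:0, 1:] = normx1" "eval_gens [:[:0, 1:]:] = normx2"
    "eval_gens [:[:[:0, 1:]:]:] = x3"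
    by (simp_all add: eval_gens_def subst_normx2_def map_poly_pCons pcompose_pCons pcompose_1
        normx2_eq_const x3_def)
  with gen show ?case
    unfolding normx2_def by (metis empty_iff insert_iff)
next
  case (add a b)
  then show ?case by (metis eval_gens_add)
next
  case (mult a b)
  then show ?case by (metis eval_gens_mult)
qed

lemma degree_normx1: "degree (normx1 :: 'k::field mpoly3) = 4"
proof -
  have sigma_linear: "sigma [:c, 1:] = [:sigma2 c + [:0, 1:], 1 :: 'k poly poly:]" for c
  proof -
    have "sigma [:c, 1:] = sigma [:c:] + sigma x1"
      by (simp add: x1_def sigma_add[symmetric])
    also have "\<dots> = [:sigma2 c:] + x1 + x2"
      by (simp add: sigma_x1 sigma_eq_pcompose[of "[:c:]"] map_poly_pCons sigma2_0)
    also have "\<dots> = [:sigma2 c + [:0, 1:], 1:]"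
      by (simp add: x1_def x2_def)
    finally show ?thesis .
  qed
  have x1_eq: "x1 = [:0, 1 :: 'k poly poly:]"
    by (simp add: x1_def)
  show ?thesis
    unfolding normx1_eq x1_eq sigma_linear by (simp add: degree_mult_eq)
qed

lemma eval_gens_add_x2_mult:
  "eval_gens P + x2 * eval_gens Q
     = pcompose (map_poly subst_normx2 P + smult [:0, 1:] (map_poly subst_normx2 Q)) normx1"
  by (simp add: eval_gens_def pcompose_add pcompose_smult x2_def)

lemma subst_normx2_independent:
  assumes "map_poly subst_normx2 P + smult [:0, 1:] (map_poly subst_normx2 Q) = 0"
  shows "P = 0 \<and> Q = 0"
proof -
  have "coeff P i = 0 \<and> coeff Q i = 0" for i
  proof -
    define F where "F b = (if b = 0 then coeff P i else coeff Q i)" for b :: nat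
    have "(\<Sum>b<2. [:0, 1:] ^ b * pcompose (F b) normx2_poly) = 0"
      using arg_cong[OF assms, of "\<lambda>p. coeff p i"]
      by (simp add: F_def numeral_2_eq_2 coeff_map_poly subst_normx2_0 subst_normx2_def)
    then have "\<forall>b<2. F b = 0"
      by (rule pcompose_expansion_eq_0[rotated 2]) (simp_all add: normx2_poly_def)
    then have "F 0 = 0" "F 1 = 0" by simp_all
    then show ?thesis by (simp add: F_def)
  qed
  then show ?thesis by (auto intro: poly_eqI)
qed

lemma monomial_basis_independent:
  assumes "\<forall>i<8. c i \<in> Aalg" and "lin_comb c monomial_basis = 0"
  shows "\<forall>i<8. c i = 0"
proof -
  have "\<forall>i. \<exists>P. i < 8 \<longrightarrow> c i = eval_gens P"
    using Aalg_eval_gens assms(1) by blast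
  from choice[OF this] obtain P where P: "\<forall>i<8. c i = eval_gens (P i)"
    by blast
  define G where
    "G a = map_poly subst_normx2 (P a) + smult [:0, 1:] (map_poly subst_normx2 (P (a + 4)))" for a
  have "lin_comb c monomial_basis = (\<Sum>a<4. [:0, 1:] ^ a * pcompose (G a) normx1)"
    unfolding lin_comb_monomial_basis G_def eval_gens_add_x2_mult[symmetric]
    using P by (simp add: eval_nat_numeral x1_def algebra_simps)
  then have "\<forall>a<4. G a = 0"
    using assms(2) by (intro pcompose_expansion_eq_0[OF degree_normx1]) simp_all
  then have P0: "\<forall>a<4. P a = 0 \<and> P (a + 4) = 0"
    unfolding G_def using subst_normx2_independent by blast
  have "P i = 0" if "i < 8" for i
  proof (cases "i < 4")
    case False
    then show ?thesis
      using that P0[rule_format, of "i - 4"] by simp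
  qed (use P0 in simp)
  then show ?thesis
    using P by (simp add: eval_gens_def)
qed

lemma Aalg_normx1: "normx1 \<in> Aalg"
  and Aalg_normx2: "normx2 \<in> Aalg"
  and Aalg_x3: "x3 \<in> Aalg"
  by (simp_all add: Aalg_def normx2_def subalg.gen)

lemmas Aalg_closed = subalg_closed[where S = "{normx1, x2 * (x2 + x3), x3}", folded Aalg_def]
  Aalg_normx1 Aalg_normx2 Aalg_x3

lemma mem_subalg_variables: "(f :: 'k::field mpoly3) \<in> subalg {x1, x2, x3}"
proof -
  have const: "[:[:c:]:] \<in> subalg {x1, x2, x3}" for c :: "'k poly"
  proof (induct c)
    case (pCons a c)
    have "[:[:pCons a c:]:] = const3 a + x3 * [:[:c:]:]"
      by (simp add: const3_def x3_def)
    then show ?case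
      by (metis pCons(2) subalg.add subalg.mult subalg.const subalg.gen insertI1 insertI2)
  qed (simp add: subalg_0)
  have coeff: "[:c:] \<in> subalg {x1, x2, x3}" for c :: "'k poly poly"
  proof (induct c)
    case (pCons a c)
    have "[:pCons a c:] = [:[:a:]:] + x2 * [:c:]"
      by (simp add: x2_def)
    then show ?case by (metis pCons(2) const subalg.add subalg.mult subalg.gen insertI1 insertI2)
  qed (simp add: subalg_0)
  show ?thesis
  proof (induct f)
    case (pCons c f)
    have "pCons c f = [:c:] + x1 * f"
      by (simp add: x1_def)
    then show ?case by (metis pCons(2) coeff subalg.add subalg.mult subalg.gen insertI1)
  qed (simp add: subalg_0)
qed

lemma lin_span_monomial_basis_x1_mult:
  assumes "CHAR('k::field) = 2" and "(f :: 'k mpoly3) \<in> lin_span Aalg monomial_basis"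
  shows "x1 * f \<in> lin_span Aalg monomial_basis"
proof -
  obtain c where f: "f = lin_comb c monomial_basis" and c: "\<forall>i<8. c i \<in> Aalg"
    using assms(2) by (auto simp: lin_span_def)
  define u :: "'k mpoly3" where "u = normx2 + x3 ^ 2"
  define v :: "'k mpoly3" where "v = x3 * normx2"
  have "x1 * f = lin_comb ((!) [normx1 * c 3, c 0 - v * c 3, c 1 - u * c 3, c 2,
      normx1 * c 7, c 4 - v * c 7, c 5 - u * c 7, c 6]) monomial_basis"
    unfolding f lin_comb_monomial_basis normx1_expand[OF assms(1)] u_def v_def
    by (simp add: algebra_simps power2_eq_square power3_eq_cube power4_eq_xxxx)
  also have "\<dots> \<in> lin_span Aalg monomial_basis"
    using c by (intro lin_comb_nth_in_lin_span) (simp_all add: u_def v_def Aalg_closed)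
  finally show ?thesis .
qed

lemma lin_span_monomial_basis_x2_mult:
  assumes "(f :: 'k::field mpoly3) \<in> lin_span Aalg monomial_basis"
  shows "x2 * f \<in> lin_span Aalg monomial_basis"
proof -
  obtain c where f: "f = lin_comb c monomial_basis" and c: "\<forall>i<8. c i \<in> Aalg"
    using assms by (auto simp: lin_span_def)
  have "x2 * f = lin_comb ((!) [normx2 * c 4, normx2 * c 5, normx2 * c 6, normx2 * c 7,
      c 0 - x3 * c 4, c 1 - x3 * c 5, c 2 - x3 * c 6, c 3 - x3 * c 7]) monomial_basis"
    unfolding f lin_comb_monomial_basis normx2_def
    by (simp add: algebra_simps power2_eq_square power3_eq_cube)
  also have "\<dots> \<in> lin_span Aalg monomial_basis"
    using c by (intro lin_comb_nth_in_lin_span) (simp_all add: Aalg_closed)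
  finally show ?thesis .
qed

lemma monomial_basis_spans:
  assumes "CHAR('k::field) = 2"
  shows "(f :: 'k mpoly3) \<in> lin_span Aalg monomial_basis"
proof -
  let ?M = "lin_span Aalg (monomial_basis :: 'k mpoly3 list)"
  have "1 = lin_comb ((!) [1, 0, 0, 0, 0, 0, 0, 0]) (monomial_basis :: 'k mpoly3 list)"
    by (simp add: lin_comb_monomial_basis)
  also have "\<dots> \<in> ?M"
    by (intro lin_comb_nth_in_lin_span) (simp_all add: Aalg_closed)
  finally have one: "1 \<in> ?M" .
  have "g \<in> subalg {x1, x2, x3} \<Longrightarrow> \<forall>m\<in>?M. g * m \<in> ?M" for g
  proof (induct rule: subalg.induct)
    case (const c)
    then show ?case
      by (auto intro: lin_span_mult Aalg_closed)
  next
    case (gen s)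
    then show ?case
      by (auto intro: lin_span_mult Aalg_closed lin_span_monomial_basis_x1_mult[OF assms]
          lin_span_monomial_basis_x2_mult)
  qed (auto simp: distrib_right mult.assoc intro: lin_span_add Aalg_closed)
  then show ?thesis
    using mem_subalg_variables one by (metis mult_1_right)
qed

lemma x3_neq_0: "(x3 :: 'k::field mpoly3) \<noteq> 0"
  by (simp add: x3_def)

lemma prime_elem_x3: "prime_elem (x3 :: 'k::field mpoly3)"
  unfolding x3_def prime_elem_const_poly_iff by (rule prime_elem_linear_field_poly) simp

lemma x3_not_dvd_normx2: "\<not> x3 dvd (normx2 :: 'k::field mpoly3)"
proof
  assume "x3 dvd (normx2 :: 'k mpoly3)"
  then have "[:0, 1:] dvd coeff (normx2_poly :: 'k poly poly) 2"
    unfolding normx2_eq_const x3_def const_poly_dvd_iff by (metis coeff_pCons_0)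
  then show False
    by (simp add: normx2_poly_def numeral_2_eq_2 is_unit_poly_iff)
qed

lemma Aalg_x3_dvd:
  assumes "CHAR('k::field) = 2" and "c \<in> Aalg" and "x3 dvd (c :: 'k mpoly3)"
  shows "\<exists>e\<in>Aalg. c = x3 * e"
proof -
  obtain h where h: "c = x3 * h"
    using assms(3) by blast
  obtain d where d: "h = lin_comb d monomial_basis" "\<forall>i<8. d i \<in> Aalg"
    using monomial_basis_spans[OF assms(1), of h] by (auto simp: lin_span_def)
  define r where "r = (!) [c - x3 * d 0, - x3 * d 1, - x3 * d 2, - x3 * d 3,
    - x3 * d 4, - x3 * d 5, - x3 * d 6, - x3 * d 7]"
  have "lin_comb r monomial_basis = 0"
    unfolding r_def using h d(1) by (simp add: lin_comb_monomial_basis algebra_simps)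
  moreover have "\<forall>i<8. r i \<in> Aalg"
    using d(2) assms(2) unfolding r_def
    by (simp add: eval_nat_numeral All_less_Suc2 Aalg_closed)
  ultimately have "r 0 = 0"
    using monomial_basis_independent[of r] by simp
  then show ?thesis
    using d(2) by (auto simp: r_def)
qed

section \<open>The kernel of Delta cubed\<close>

lemma Delta_cube: "(Delta ^^ 3) f = sigma (sigma (sigma f)) - 3 * sigma (sigma f) + 3 * sigma f - f"
proof -
  have "(Delta ^^ 3) f = Delta (Delta (Delta f))"
    by (simp add: eval_nat_numeral)
  also have "\<dots> = sigma (sigma (sigma f)) - 3 * sigma (sigma f) + 3 * sigma f - f"
    unfolding Delta_def sigma_diff by algebra
  finally show ?thesis .
qed

lemma Delta3_x1_pow_x2_pow:
  "(Delta ^^ 3) (x1 ^ a * x2 ^ b)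
     = (x1 + x2 + (x2 + x3) + (x2 + x3 + x3)) ^ a * (x2 + x3 + x3 + x3) ^ b
       - 3 * ((x1 + x2 + (x2 + x3)) ^ a * (x2 + x3 + x3) ^ b)
       + 3 * ((x1 + x2) ^ a * (x2 + x3) ^ b) - x1 ^ a * x2 ^ b"
  by (simp only: Delta_cube sigma_mult sigma_power sigma_add sigma_x1 sigma_x2 sigma_x3)

lemma Delta3_monomial_basis:
  assumes "CHAR('k::field) = 2"
  shows "map (Delta ^^ 3) (monomial_basis :: 'k mpoly3 list) = [0, 0, 0, normx2 * x3, 0,
    x3 ^ 2, x3 ^ 3, x3 ^ 4 + normx2 * x3 ^ 2 + normx2 * x3 * x2 + x3 ^ 2 * x1 ^ 2 + x3 ^ 3 * x1]"
proof -
  note two = two_eq_zero[OF assms]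
  have "(Delta ^^ 3) (1 :: 'k mpoly3) = 0"
    using Delta3_x1_pow_x2_pow[of 0 0] by simp
  moreover have "(Delta ^^ 3) (x1 :: 'k mpoly3) = 0"
    using Delta3_x1_pow_x2_pow[of 1 0] by simp
  moreover have "(Delta ^^ 3) (x2 :: 'k mpoly3) = 0"
    using Delta3_x1_pow_x2_pow[of 0 1] by simp
  moreover have "(Delta ^^ 3) (x1 ^ 2 :: 'k mpoly3) = 0"
    unfolding Delta3_x1_pow_x2_pow[of 2 0, simplified]
    by (rule char2_eqI[OF two, where c = "3*x2*x3 + 3*x3^2"]) algebra
  moreover have "(Delta ^^ 3) (x1 * x2 :: 'k mpoly3) = x3 ^ 2"
    unfolding Delta3_x1_pow_x2_pow[of 1 1, simplified]
    by (rule char2_eqI[OF two, where c = "x3^2"]) algebra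
  moreover have "(Delta ^^ 3) (x1 ^ 2 * x2 :: 'k mpoly3) = x3 ^ 3"
    unfolding Delta3_x1_pow_x2_pow[of 2 1, simplified]
    by (rule char2_eqI[OF two, where c = "3*x1*x3^2 + 18*x2*x3^2 + 6*x2^2*x3 + 10*x3^3"]) algebra
  moreover have "(Delta ^^ 3) (x1 ^ 3 :: 'k mpoly3) = normx2 * x3"
    unfolding Delta3_x1_pow_x2_pow[of 3 0, simplified] normx2_def
    by (rule char2_eqI[OF two, where c = "9*x1*x2*x3 + 9*x1*x3^2 + 31*x2*x3^2 + 22*x2^2*x3
        + 3*x2^3 + 12*x3^3"]) algebra
  moreover have "(Delta ^^ 3) (x1 ^ 3 * x2 :: 'k mpoly3)
      = x3 ^ 4 + normx2 * x3 ^ 2 + normx2 * x3 * x2 + x3 ^ 2 * x1 ^ 2 + x3 ^ 3 * x1"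
    unfolding Delta3_x1_pow_x2_pow[of 3 1, simplified] normx2_def
    by (rule char2_eqI[OF two, where c = "54*x1*x2*x3^2 + 18*x1*x2^2*x3 + 31*x1*x3^3
        + 4*x1^2*x3^2 + 115*x2*x3^3 + 116*x2^2*x3^2 + 40*x2^3*x3 + 3*x2^4 + 37*x3^4"]) algebra
  ultimately show ?thesis
    by (simp add: monomial_basis_def)
qed

lemma lin_comb_monomial_basis_in_K3_iff:
  assumes "CHAR('k::field) = 2" and c: "\<forall>i<8. c i \<in> Aalg"
  shows "lin_comb c (monomial_basis :: 'k mpoly3 list) \<in> K3 \<longleftrightarrow>
    c 7 = 0 \<and> c 3 * normx2 + c 5 * x3 + c 6 * x3 ^ 2 = 0"
proof -
  define r where "r = c 3 * normx2 + c 5 * x3 + c 6 * x3 ^ 2"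
  define d where "d = (!) [x3 * r + c 7 * (x3 ^ 4 + normx2 * x3 ^ 2), c 7 * x3 ^ 3, c 7 * x3 ^ 2, 0,
    c 7 * (normx2 * x3), 0, 0, 0]"
  have "(Delta ^^ 3) (lin_comb c monomial_basis) = lin_comb c (map (Delta ^^ 3) monomial_basis)"
    using c sigma_Aalg[OF assms(1)] by (intro Delta_pow_lin_comb) simp
  also have "\<dots> = lin_comb d monomial_basis"
    unfolding Delta3_monomial_basis[OF assms(1)] lin_comb_monomial_basis d_def r_def
    by (simp add: lin_comb_def eval_nat_numeral algebra_simps)
  finally have Delta3: "(Delta ^^ 3) (lin_comb c monomial_basis) = lin_comb d monomial_basis" .
  have d_Aalg: "\<forall>i<8. d i \<in> Aalg"
    using c by (simp add: d_def r_def eval_nat_numeral All_less_Suc2 Aalg_closed)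
  have "lin_comb d monomial_basis = 0 \<longleftrightarrow> (\<forall>i<8. d i = 0)"
  proof
    show "lin_comb d monomial_basis = 0 \<Longrightarrow> \<forall>i<8. d i = 0"
      by (rule monomial_basis_independent[OF d_Aalg])
    show "\<forall>i<8. d i = 0 \<Longrightarrow> lin_comb d monomial_basis = 0"
      unfolding lin_comb_def by (rule sum.neutral) simp
  qed
  also have "\<dots> \<longleftrightarrow> c 7 = 0 \<and> r = 0"
    by (simp add: d_def eval_nat_numeral All_less_Suc2) (auto simp: x3_neq_0)
  finally show ?thesis
    by (simp add: K3_def Delta3 r_def)
qed

lemma Delta_x1_cube:
  assumes "CHAR('k::field) = 2"
  shows "Delta (x1 ^ 3 :: 'k mpoly3)
    = x1 ^ 2 * x2 + x3 * (x1 * x2) + normx2 * x1 + (x3 ^ 2 + normx2) * x2 + normx2 * x3"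
  unfolding Delta_def sigma_power sigma_x1 normx2_def
  by (rule char2_eqI[OF two_eq_zero[OF assms], where c = "x1*x2^2 + x1^2*x2 - x1*x2*x3
      - x2*x3^2 - x2^2*x3"]) algebra

lemma Delta_x1_cube_x2:
  assumes "CHAR('k::field) = 2"
  shows "Delta (x1 ^ 3 * x2 :: 'k mpoly3)
    = normx2 * (x1 * x2) + normx2 * x1 ^ 2 + normx2 * x3 * x2 + normx2 ^ 2 + x3 * x1 ^ 3"
  unfolding Delta_def sigma_power sigma_mult sigma_x1 sigma_x2 normx2_def
  by (rule char2_eqI[OF two_eq_zero[OF assms], where c = "x1*x2^2*x3 + x1*x2^3 + x1^2*x2*x3
      + x1^2*x2^2 - x2^2*x3^2 - x2^3*x3"]) algebra

definition K3_basis :: "'k::field mpoly3 list" where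
  "K3_basis = [1, x1, x2, x1 ^ 2, Delta (x1 ^ 3), Delta (x1 ^ 3 * x2)]"

lemma length_K3_basis [simp]: "length K3_basis = 6"
  by (simp add: K3_basis_def)

lemma lin_comb_K3_basis:
  assumes "CHAR('k::field) = 2"
  shows "lin_comb a (K3_basis :: 'k mpoly3 list) = lin_comb ((!)
    [a 0 + a 4 * (normx2 * x3) + a 5 * normx2 ^ 2, a 1 + a 4 * normx2, a 3 + a 5 * normx2,
     a 5 * x3, a 2 + a 4 * (x3 ^ 2 + normx2) + a 5 * (normx2 * x3), a 4 * x3 + a 5 * normx2,
     a 4, 0]) monomial_basis"
  unfolding lin_comb_monomial_basis
  unfolding lin_comb_def K3_basis_def Delta_x1_cube[OF assms] Delta_x1_cube_x2[OF assms]
  by (simp add: eval_nat_numeral algebra_simps power2_eq_square power3_eq_cube)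

lemma lin_span_K3_basis_subset_K3:
  assumes "CHAR('k::field) = 2"
  shows "lin_span Aalg (K3_basis :: 'k mpoly3 list) \<subseteq> K3"
proof
  fix f :: "'k mpoly3"
  assume "f \<in> lin_span Aalg K3_basis"
  then obtain a where f: "f = lin_comb a K3_basis" and a: "\<forall>i<6. a i \<in> Aalg"
    by (auto simp: lin_span_def K3_basis_def)
  have "a 5 * x3 * normx2 + (a 4 * x3 + a 5 * normx2) * x3 + a 4 * x3 ^ 2 = 2 * (a 4 * x3 ^ 2
      + a 5 * normx2 * x3)"
    by (simp add: algebra_simps power2_eq_square)
  then show "f \<in> K3"
    unfolding f lin_comb_K3_basis[OF assms]
    using a two_eq_zero[OF assms]
    by (subst lin_comb_monomial_basis_in_K3_iff[OF assms])
      (simp_all add: eval_nat_numeral All_less_Suc2 Aalg_closed)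
qed

lemma K3_coordinates:
  assumes "CHAR('k::field) = 2" and c: "\<forall>i<8. c i \<in> Aalg"
    and "lin_comb c (monomial_basis :: 'k mpoly3 list) \<in> K3"
  shows "c 7 = 0 \<and> (\<exists>e\<in>Aalg. c 3 = x3 * e \<and> c 5 = c 6 * x3 + e * normx2)"
proof -
  have c7: "c 7 = 0" and r: "c 3 * normx2 + c 5 * x3 + c 6 * x3 ^ 2 = 0"
    using assms(3) lin_comb_monomial_basis_in_K3_iff[OF assms(1) c] by simp_all
  have "c 3 * normx2 = x3 * (- (c 5 + c 6 * x3))"
    using r by algebra
  then have "x3 dvd c 3 * normx2"
    by (rule dvdI)
  then have "x3 dvd c 3"
    using prime_elem_dvd_multD[OF prime_elem_x3] x3_not_dvd_normx2 by blast
  moreover have "c 3 \<in> Aalg"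
    using c by simp
  ultimately obtain e where e: "e \<in> Aalg" and c3: "c 3 = x3 * e"
    using Aalg_x3_dvd[OF assms(1)] by blast
  have "x3 * (c 5 + (c 6 * x3 + e * normx2)) = 0"
    using r c3 by algebra
  then have "c 5 = - (c 6 * x3 + e * normx2)"
    by (intro eq_neg_iff_add_eq_0[THEN iffD2]) (simp add: x3_neq_0)
  then have "c 5 = c 6 * x3 + e * normx2"
    unfolding char2_uminus[OF two_eq_zero[OF assms(1)]] .
  with c7 c3 e show ?thesis by blast
qed

lemma K3_subset_lin_span_K3_basis:
  assumes "CHAR('k::field) = 2"
  shows "K3 \<subseteq> lin_span Aalg (K3_basis :: 'k mpoly3 list)"
proof
  fix f :: "'k mpoly3"
  assume "f \<in> K3"
  obtain c where f: "f = lin_comb c monomial_basis" and c: "\<forall>i<8. c i \<in> Aalg"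
    using monomial_basis_spans[OF assms, of f] by (auto simp: lin_span_def)
  obtain e where c7: "c 7 = 0" and e: "e \<in> Aalg" and c3: "c 3 = x3 * e"
    and c5: "c 5 = c 6 * x3 + e * normx2"
    using K3_coordinates[OF assms c] \<open>f \<in> K3\<close> f by blast
  define a where "a = (!) [c 0 - c 6 * (normx2 * x3) - e * normx2 ^ 2, c 1 - c 6 * normx2,
    c 4 - c 6 * (x3 ^ 2 + normx2) - e * (normx2 * x3), c 2 - e * normx2, c 6, e]"
  have "f = lin_comb a K3_basis"
    unfolding f lin_comb_K3_basis[OF assms] lin_comb_monomial_basis
    by (simp add: a_def c3 c5 c7 algebra_simps)
  also have "\<dots> \<in> lin_span Aalg K3_basis"
    unfolding a_def using c e
    by (intro lin_comb_nth_in_lin_span) (simp_all add: eval_nat_numeral All_less_Suc2 Aalg_closed)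
  finally show "f \<in> lin_span Aalg K3_basis" .
qed

lemma K3_basis_independent:
  assumes "CHAR('k::field) = 2" and a: "\<forall>i<6. a i \<in> Aalg"
    and "lin_comb a (K3_basis :: 'k mpoly3 list) = 0"
  shows "\<forall>i<6. a i = 0"
proof -
  have "\<forall>i<8. [a 0 + a 4 * (normx2 * x3) + a 5 * normx2 ^ 2, a 1 + a 4 * normx2,
      a 3 + a 5 * normx2, a 5 * x3, a 2 + a 4 * (x3 ^ 2 + normx2) + a 5 * (normx2 * x3),
      a 4 * x3 + a 5 * normx2, a 4, 0] ! i = (0 :: 'k mpoly3)"
    using assms(3) unfolding lin_comb_K3_basis[OF assms(1)]
    by (rule monomial_basis_independent[rotated])
      (use a in \<open>simp add: eval_nat_numeral All_less_Suc2 Aalg_closed\<close>)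
  then show ?thesis
    by (simp add: eval_nat_numeral All_less_Suc2) (auto simp: x3_neq_0)
qed

theorem proposition4p18:
  assumes "CHAR('k::field) = 2"
  shows "free_with_basis (Aalg :: 'k mpoly3 set) K3
           [1, x1, x2, x1 ^ 2, Delta (x1 ^ 3), Delta (x1 ^ 3 * x2)]"
  unfolding free_with_basis_iff K3_basis_def[symmetric]
  using K3_subset_lin_span_K3_basis[OF assms] lin_span_K3_basis_subset_K3[OF assms]
    K3_basis_independent[OF assms]
  by auto

end
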